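(* Let $F(z)=\sum_{k=0}^\infty b_k z^k\in\mathcal{B}$ and let $n\ge 1$ be an integer. Then \[ \sum_{k=n+1}^{\infty}k^2|b_k|^2r^{2k-2}\le \frac{(n+2)^{n+2}}{4n^n}\,r^{2n},\qquad 0\le r\le \sqrt{\frac{n}{n+2}}. \] Moreover, equality holds for the function $F_n\in\mathcal{B}$ with $F_n(0)=0$ and $F_n'(z)=\frac{n+2}{2}\left(\frac{n+2}{n}\right)^{n/2}z^n$.
   Context: $\mathbb{D}$ denotes the open unit disc. $\mathcal{B}$ is the class of functions $F$ analytic in $\mathbb{D}$ satisfying $|F'(z)|\le \frac{1}{1-|z|^2}$ for all $z\in\mathbb{D}$. For $F\in\mathcal{B}$ we write its Taylor expansion as $F(z)=\sum_{k=0}^\infty b_k z^k$. *)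

theory Defs
  imports "HOL-Analysis.Analysis"
begin

definition classB :: "(complex \<Rightarrow> complex) \<Rightarrow> bool" where
  "classB F \<longleftrightarrow> F holomorphic_on ball 0 1 \<and>
     (\<forall>z\<in>ball 0 1. norm (deriv F z) \<le> 1 / (1 - norm z ^ 2))"

definition taylor_coeff :: "(complex \<Rightarrow> complex) \<Rightarrow> nat \<Rightarrow> complex" where
  "taylor_coeff F k = (deriv ^^ k) F 0 / of_nat (fact k)"

end

theory Submission
  imports Defs "HOL-Complex_Analysis.Complex_Analysis"
begin

text \<open>Writing \<open>F' = \<Sum> a\<^sub>m z^m\<close>, the sum to be bounded is the tail \<open>\<Sum>\<^sub>m\<^sub>\<ge>\<^sub>n |a\<^sub>m|^2 r^(2m)\<close>.
  On the circle \<open>|z| = \<rho>\<close> with \<open>\<rho>^2 = n/(n+2)\<close> the class-B bound gives \<open>|F'| \<le> (n+2)/2\<close>, so by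
  Parseval's identity \<open>\<Sum>\<^sub>m |a\<^sub>m|^2 \<rho>^(2m) \<le> (n+2)^2/4\<close>, and for \<open>r \<le> \<rho>\<close> the tail from \<open>m = n\<close> on
  is at most \<open>(r/\<rho>)^(2n)\<close> times this. The extremal function lies in the class by the weighted
  AM-GM inequality for \<open>n\<close> copies of \<open>(n+2)|z|^2/n\<close> and two copies of \<open>(n+2)(1-|z|^2)/2\<close>,
  and its tail sum has a single nonzero term.\<close>

lemma taylor_coeff_power_series:
  assumes "f holomorphic_on ball 0 R" "norm z < R"
  shows "(\<lambda>m. taylor_coeff f m * z ^ m) sums f z"
  using holomorphic_power_series[of f 0 R z] assms by (simp add: taylor_coeff_def)

lemma sums_norm_sq_div_circle:
  assumes holf: "f holomorphic_on ball 0 R" and z: "norm z = \<rho>" "0 < \<rho>" "\<rho> < R"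
  shows "(\<lambda>m. f z * cnj (taylor_coeff f m) * of_real (\<rho> ^ (2*m)) / z ^ Suc m)
           sums (of_real (norm (f z) ^ 2) / z)"
proof -
  have "z \<noteq> 0" using z by auto
  have cnj_z: "cnj z = of_real (\<rho>\<^sup>2) / z"
    using complex_norm_square[of z] \<open>z \<noteq> 0\<close> z(1) by (simp add: field_simps)
  have "(\<lambda>m. cnj (taylor_coeff f m * z ^ m)) sums cnj (f z)"
    using taylor_coeff_power_series[OF holf] z by (intro sums_cnj[THEN iffD2]) simp
  then have "(\<lambda>m. f z * cnj (taylor_coeff f m * z ^ m) / z) sums (f z * cnj (f z) / z)"
    by (intro sums_mult sums_divide)
  moreover have "f z * cnj (taylor_coeff f m * z ^ m) / z
      = f z * cnj (taylor_coeff f m) * of_real (\<rho> ^ (2*m)) / z ^ Suc m" for m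
    by (simp add: cnj_z power_divide field_simps flip: power_mult power_mult_distrib)
  ultimately show ?thesis
    using complex_norm_square[of "f z"] by simp
qed

lemma has_contour_integral_circlepath_taylor_term:
  assumes holf: "f holomorphic_on ball 0 R" and "0 < \<rho>" "\<rho> < R"
  shows "((\<lambda>z. f z * cnj (taylor_coeff f m) * of_real (\<rho> ^ (2*m)) / z ^ Suc m)
           has_contour_integral 2 * pi * \<i> * of_real (norm (taylor_coeff f m) ^ 2 * \<rho> ^ (2*m)))
         (circlepath 0 \<rho>)"
proof -
  have "((\<lambda>z. f z / (z - 0) ^ Suc m) has_contour_integral 2 * pi * \<i> / fact m * (deriv ^^ m) f 0)
          (circlepath 0 \<rho>)"
    using assms
    by (intro Cauchy_has_contour_integral_higher_derivative_circlepath
          holomorphic_on_imp_continuous_on holomorphic_on_subset[OF holf]) auto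
  then have "((\<lambda>z. cnj (taylor_coeff f m) * of_real (\<rho> ^ (2*m)) * (f z / z ^ Suc m))
      has_contour_integral cnj (taylor_coeff f m) * of_real (\<rho> ^ (2*m)) * (2 * pi * \<i> * taylor_coeff f m))
      (circlepath 0 \<rho>)"
    by (intro has_contour_integral_lmul) (simp add: taylor_coeff_def)
  moreover have "cnj (taylor_coeff f m) * of_real (\<rho> ^ (2*m)) * (2 * pi * \<i> * taylor_coeff f m)
      = 2 * pi * \<i> * of_real (norm (taylor_coeff f m) ^ 2 * \<rho> ^ (2*m))"
    using complex_norm_square[of "taylor_coeff f m"] by (simp add: algebra_simps)
  ultimately have "((\<lambda>z. cnj (taylor_coeff f m) * of_real (\<rho> ^ (2*m)) * (f z / z ^ Suc m))
      has_contour_integral 2 * pi * \<i> * of_real (norm (taylor_coeff f m) ^ 2 * \<rho> ^ (2*m)))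
      (circlepath 0 \<rho>)"
    by argo
  then show ?thesis
    by (rule has_contour_integral_eq) (simp add: field_simps)
qed

lemma uniform_limit_taylor_terms_circle:
  assumes holf: "f holomorphic_on ball 0 R" and \<rho>: "0 < \<rho>" "\<rho> < R"
  defines "g m z \<equiv> f z * cnj (taylor_coeff f m) * of_real (\<rho> ^ (2*m)) / z ^ Suc m"
  shows "uniform_limit (sphere 0 \<rho>) (\<lambda>N z. \<Sum>m<N. g m z) (\<lambda>z. \<Sum>m. g m z) sequentially"
proof -
  obtain B where B: "\<And>z. z \<in> sphere 0 \<rho> \<Longrightarrow> norm (f z) \<le> B"
  proof -
    have "continuous_on (sphere 0 \<rho>) f"
      using \<rho> by (intro holomorphic_on_imp_continuous_on holomorphic_on_subset[OF holf]) auto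
    then have "bounded (f ` sphere 0 \<rho>)"
      by (intro compact_imp_bounded compact_continuous_image) auto
    then show ?thesis
      using that unfolding bounded_iff by blast
  qed
  have "summable (\<lambda>m. norm (taylor_coeff f m * of_real \<rho> ^ m))"
  proof (rule powser_insidea)
    show "summable (\<lambda>m. taylor_coeff f m * of_real ((\<rho> + R) / 2) ^ m)"
    proof (rule sums_summable[OF taylor_coeff_power_series[OF holf]])
      show "norm (complex_of_real ((\<rho> + R) / 2)) < R"
        using \<rho> by (simp only: norm_of_real) auto
    qed
    show "norm (complex_of_real \<rho>) < norm (complex_of_real ((\<rho> + R) / 2))"
      using \<rho> by (simp only: norm_of_real) auto
  qed
  moreover have "norm (g m z) \<le> B / \<rho> * norm (taylor_coeff f m * of_real \<rho> ^ m)"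
    if "z \<in> sphere 0 \<rho>" for m z
  proof -
    have "norm (g m z) = norm (f z) * (norm (taylor_coeff f m) * \<rho> ^ m) / \<rho>"
      using that \<rho> by (simp add: g_def norm_mult norm_divide norm_power power_mult_distrib
          field_simps flip: power_mult power2_eq_square)
    also have "\<dots> \<le> B * (norm (taylor_coeff f m) * \<rho> ^ m) / \<rho>"
      using B[OF that] \<rho> by (intro divide_right_mono mult_right_mono) auto
    finally show ?thesis
      using \<rho> by (simp add: norm_mult norm_power)
  qed
  ultimately show ?thesis
    by (intro Weierstrass_m_test[where M = "\<lambda>m. B / \<rho> * norm (taylor_coeff f m * of_real \<rho> ^ m)"])
      (auto intro: summable_mult)
qed

text \<open>Since \<open>cnj z = \<rho>^2/z\<close> on the circle, \<open>|f|^2/z\<close> is the sum of the terms integrated above, and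
  the convergence is uniform, so the series can be integrated termwise.\<close>

lemma Parseval_circlepath:
  assumes holf: "f holomorphic_on ball 0 R" and \<rho>: "0 < \<rho>" "\<rho> < R"
  shows "summable (\<lambda>m. norm (taylor_coeff f m) ^ 2 * \<rho> ^ (2*m))"
    and "((\<lambda>z. of_real (norm (f z) ^ 2) / z) has_contour_integral
           2 * pi * \<i> * of_real (\<Sum>m. norm (taylor_coeff f m) ^ 2 * \<rho> ^ (2*m))) (circlepath 0 \<rho>)"
proof -
  define g where "g m z = f z * cnj (taylor_coeff f m) * of_real (\<rho> ^ (2*m)) / z ^ Suc m" for m z
  define s where "s N = (\<Sum>m<N. norm (taylor_coeff f m) ^ 2 * \<rho> ^ (2*m))" for N
  have unif: "uniform_limit (sphere 0 \<rho>) (\<lambda>N z. \<Sum>m<N. g m z) (\<lambda>z. \<Sum>m. g m z) sequentially"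
    unfolding g_def by (rule uniform_limit_taylor_terms_circle[OF holf \<rho>])
  have partial: "((\<lambda>z. \<Sum>m<N. g m z) has_contour_integral 2 * pi * \<i> * of_real (s N)) (circlepath 0 \<rho>)" for N
    unfolding s_def of_real_sum sum_distrib_left g_def
    by (intro has_contour_integral_sum has_contour_integral_circlepath_taylor_term[OF holf \<rho>]) auto
  have "\<forall>\<^sub>F N in sequentially. (\<lambda>z. \<Sum>m<N. g m z) contour_integrable_on circlepath 0 \<rho>"
    using partial by (intro always_eventually allI has_contour_integral_integrable)
  note lim = contour_integral_uniform_limit_circlepath[OF this unif trivial_limit_sequentially \<rho>(1)]
  define I where "I = contour_integral (circlepath 0 \<rho>) (\<lambda>z. \<Sum>m. g m z)"
  have "(\<lambda>N. 2 * pi * \<i> * of_real (s N)) \<longlonglongrightarrow> I"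
    using lim(2) unfolding I_def contour_integral_unique[OF partial] .
  then have "(\<lambda>N. 2 * pi * \<i> * of_real (s N) / (2 * pi * \<i>)) \<longlonglongrightarrow> I / (2 * pi * \<i>)"
    by (intro tendsto_divide tendsto_const) auto
  then have lim_complex: "(\<lambda>N. of_real (s N)) \<longlonglongrightarrow> I / (2 * pi * \<i>)"
    by simp
  then have lim_real: "s \<longlonglongrightarrow> Re (I / (2 * pi * \<i>))"
    using tendsto_Re by fastforce
  then have sums: "(\<lambda>m. norm (taylor_coeff f m) ^ 2 * \<rho> ^ (2*m)) sums Re (I / (2 * pi * \<i>))"
    unfolding sums_def s_def .
  then show "summable (\<lambda>m. norm (taylor_coeff f m) ^ 2 * \<rho> ^ (2*m))"
    by (rule sums_summable)
  have "I = 2 * pi * \<i> * of_real (Re (I / (2 * pi * \<i>)))"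
  proof -
    have "(\<lambda>N. of_real (s N)) \<longlonglongrightarrow> complex_of_real (Re (I / (2 * pi * \<i>)))"
      using lim_real by (rule tendsto_of_real)
    then have "I / (2 * pi * \<i>) = of_real (Re (I / (2 * pi * \<i>)))"
      using lim_complex LIMSEQ_unique by blast
    then show ?thesis
      by (simp add: field_simps)
  qed
  moreover have "((\<lambda>z. \<Sum>m. g m z) has_contour_integral I) (circlepath 0 \<rho>)"
    unfolding I_def using lim(1) by (rule has_contour_integral_integral)
  ultimately have "((\<lambda>z. \<Sum>m. g m z) has_contour_integral
      2 * pi * \<i> * of_real (\<Sum>m. norm (taylor_coeff f m) ^ 2 * \<rho> ^ (2*m))) (circlepath 0 \<rho>)"
    using sums by (simp add: sums_iff)
  then show "((\<lambda>z. of_real (norm (f z) ^ 2) / z) has_contour_integral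
           2 * pi * \<i> * of_real (\<Sum>m. norm (taylor_coeff f m) ^ 2 * \<rho> ^ (2*m))) (circlepath 0 \<rho>)"
  proof (rule has_contour_integral_eq)
    show "(\<Sum>m. g m z) = of_real (norm (f z) ^ 2) / z" if "z \<in> path_image (circlepath 0 \<rho>)" for z
      using sums_norm_sq_div_circle[OF holf _ \<rho>, of z] that \<rho> unfolding g_def
      by (simp add: sums_iff path_image_circlepath)
  qed
qed

lemma Bessel_circlepath:
  assumes holf: "f holomorphic_on ball 0 R" and \<rho>: "0 < \<rho>" "\<rho> < R"
    and bound: "\<And>z. norm z = \<rho> \<Longrightarrow> norm (f z) \<le> M"
  shows "(\<Sum>m. norm (taylor_coeff f m) ^ 2 * \<rho> ^ (2*m)) \<le> M ^ 2"
proof -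
  define S where "S = (\<Sum>m. norm (taylor_coeff f m) ^ 2 * \<rho> ^ (2*m))"
  have "S \<ge> 0"
    unfolding S_def using Parseval_circlepath(1)[OF holf \<rho>] by (intro suminf_nonneg) auto
  have "0 \<le> norm (f \<rho>)" by simp
  also have "\<dots> \<le> M" using bound \<rho> by simp
  finally have "M \<ge> 0" .
  have "norm (2 * pi * \<i> * of_real S) \<le> M ^ 2 / \<rho> * (2 * pi * \<rho>)"
  proof (rule has_contour_integral_bound_circlepath)
    show "((\<lambda>z. of_real (norm (f z) ^ 2) / z) has_contour_integral 2 * pi * \<i> * of_real S) (circlepath 0 \<rho>)"
      unfolding S_def by (rule Parseval_circlepath(2)[OF holf \<rho>])
    show "norm (of_real (norm (f z) ^ 2) / z) \<le> M ^ 2 / \<rho>" if "norm (z - 0) = \<rho>" for z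
      using that bound[of z] \<rho> by (simp add: norm_divide norm_power divide_right_mono power_mono)
  qed (use \<rho> in auto)
  then show ?thesis
    using \<open>S \<ge> 0\<close> \<rho> by (simp add: norm_mult S_def[symmetric])
qed

lemma taylor_coeff_Suc: "taylor_coeff f (Suc m) = taylor_coeff (deriv f) m / of_nat (Suc m)"
  unfolding taylor_coeff_def by (simp add: funpow_Suc_right del: funpow.simps) (simp add: field_simps)

lemma taylor_coeff_eventually_monomial:
  assumes "eventually (\<lambda>z. f z = c * z ^ n) (nhds 0)"
  shows "taylor_coeff f m = (if m = n then c else 0)"
proof -
  have "(deriv ^^ m) f 0 = (deriv ^^ m) (\<lambda>z. c * z ^ n) 0"
    by (rule higher_deriv_cong_ev[OF assms refl])
  also have "\<dots> = c * (deriv ^^ m) (\<lambda>z. z ^ n) 0"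
    by (rule higher_deriv_cmult[of _ UNIV]) (auto intro: holomorphic_intros)
  also have "\<dots> = c * (pochhammer (of_nat (Suc n - m)) m * 0 ^ (n - m))"
    using higher_deriv_power[of m "0::complex" n 0] by simp
  also have "\<dots> = (if m = n then c * fact n else 0)"
    by (cases m n rule: linorder_cases) (auto simp: pochhammer_fact pochhammer_0_left)
  finally show ?thesis
    by (simp add: taylor_coeff_def)
qed

lemma power_series_tail_le:
  fixes c :: "nat \<Rightarrow> real"
  assumes c: "\<And>m. 0 \<le> c m" and summable: "summable (\<lambda>m. c m * \<rho> ^ m)"
    and r: "0 \<le> r" "r \<le> \<rho>" and "0 < \<rho>"
  shows "summable (\<lambda>j. c (j + n) * r ^ (j + n))"
    and "(\<Sum>j. c (j + n) * r ^ (j + n)) \<le> (r / \<rho>) ^ n * (\<Sum>m. c m * \<rho> ^ m)"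
proof -
  have tail: "summable (\<lambda>j. c (j + n) * \<rho> ^ (j + n))"
    using summable by (rule summable_ignore_initial_segment)
  have le: "c (j + n) * r ^ (j + n) \<le> (r / \<rho>) ^ n * (c (j + n) * \<rho> ^ (j + n))" for j
  proof -
    have "r ^ j \<le> \<rho> ^ j" using r by (intro power_mono) auto
    then have "(r / \<rho>) ^ n * \<rho> ^ n * r ^ j \<le> (r / \<rho>) ^ n * \<rho> ^ n * \<rho> ^ j"
      using r \<open>0 < \<rho>\<close> by (intro mult_left_mono) auto
    then have "r ^ (j + n) \<le> (r / \<rho>) ^ n * \<rho> ^ (j + n)"
      using \<open>0 < \<rho>\<close> by (simp add: power_add power_divide mult.commute)
    then show ?thesis
      using c[of "j + n"] by (simp add: mult_left_mono mult.left_commute)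
  qed
  have scaled: "summable (\<lambda>j. (r / \<rho>) ^ n * (c (j + n) * \<rho> ^ (j + n)))"
    using tail by (rule summable_mult)
  show "summable (\<lambda>j. c (j + n) * r ^ (j + n))"
    using r c by (intro summable_comparison_test'[OF scaled, of 0]) (auto intro: le)
  then have "(\<Sum>j. c (j + n) * r ^ (j + n)) \<le> (\<Sum>j. (r / \<rho>) ^ n * (c (j + n) * \<rho> ^ (j + n)))"
    using le scaled by (intro suminf_le)
  also have "\<dots> = (r / \<rho>) ^ n * (\<Sum>j. c (j + n) * \<rho> ^ (j + n))"
    by (rule suminf_mult[OF tail])
  also have "\<dots> \<le> (r / \<rho>) ^ n * (\<Sum>m. c m * \<rho> ^ m)"
  proof (rule mult_left_mono)
    show "(\<Sum>j. c (j + n) * \<rho> ^ (j + n)) \<le> (\<Sum>m. c m * \<rho> ^ m)"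
      using suminf_split_initial_segment[OF summable, of n] c \<open>0 < \<rho>\<close> by (simp add: sum_nonneg)
  qed (use r \<open>0 < \<rho>\<close> in auto)
  finally show "(\<Sum>j. c (j + n) * r ^ (j + n)) \<le> (r / \<rho>) ^ n * (\<Sum>m. c m * \<rho> ^ m)" .
qed

lemma power_mult_power_le_one:
  fixes u v :: real
  assumes "0 \<le> u" "0 \<le> v" "real m * u + real k * v = real m + real k"
  shows "u ^ m * v ^ k \<le> 1"
proof (cases "m + k = 0")
  case True
  then show ?thesis by simp
next
  case False
  define x where "x i = (if i < m then u else v)" for i
  have split: "{..<m+k} \<inter> {i. i < m} = {..<m}" "{..<m+k} \<inter> - {i. i < m} = {m..<m+k}"
    by auto
  have "(\<Prod>i<m+k. x i) powr (1 / real (card {..<m+k})) \<le> (\<Sum>i<m+k. x i / real (card {..<m+k}))"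
    using False assms by (intro arith_geom_mean) (auto simp: x_def)
  also have "\<dots> = (real m * u + real k * v) / (real m + real k)"
    unfolding x_def sum_divide_distrib[symmetric] sum.If_cases[OF finite_lessThan] split by simp
  also have "\<dots> = 1"
    using assms False by (simp flip: of_nat_add)
  finally have "(u ^ m * v ^ k) powr (1 / (real m + real k)) \<le> 1"
    unfolding x_def prod.If_cases[OF finite_lessThan] split by simp
  moreover have "u ^ m * v ^ k \<ge> 0" using assms by simp
  ultimately have "((u ^ m * v ^ k) powr (1 / (real m + real k))) powr (real m + real k) \<le> 1"
    by (intro powr_le1) auto
  then show ?thesis
    using \<open>u ^ m * v ^ k \<ge> 0\<close> False by (simp add: powr_powr)
qed

lemma powr_half_squared:
  fixes x :: real
  assumes "0 < x"
  shows "(x powr (real n / 2)) ^ 2 = x ^ n"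
  using assms by (simp add: power2_eq_square flip: powr_add powr_realpow)

definition extremal_coeff :: "nat \<Rightarrow> real" where
  "extremal_coeff n = (real n + 2) / 2 * ((real n + 2) / real n) powr (real n / 2)"

lemma extremal_coeff_squared:
  assumes "n \<ge> 1"
  shows "extremal_coeff n ^ 2 = ((real n + 2) / 2) ^ 2 * ((real n + 2) / real n) ^ n"
proof -
  have "0 < (real n + 2) / real n" using assms by simp
  then show ?thesis
    unfolding extremal_coeff_def power_mult_distrib by (simp only: powr_half_squared)
qed

lemma sharp_constant_eq:
  assumes "n \<ge> 1"
  shows "real (n + 2) ^ (n + 2) / (4 * real n ^ n) = ((real n + 2) / 2) ^ 2 * ((real n + 2) / real n) ^ n"
  using assms by (simp add: power_divide power_add power2_eq_square field_simps)

lemma extremal_coeff_mult_power_le: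
  assumes "n \<ge> 1" "0 \<le> t" "t < 1"
  shows "extremal_coeff n * t ^ n \<le> 1 / (1 - t ^ 2)"
proof -
  have "t ^ 2 < 1" using assms by (simp add: power_less_one_iff)
  have "real n * ((real n + 2) / real n * t ^ 2) + 2 * ((real n + 2) / 2 * (1 - t ^ 2)) = real n + 2"
    using assms by (simp add: field_simps)
  then have "((real n + 2) / real n * t ^ 2) ^ n * ((real n + 2) / 2 * (1 - t ^ 2)) ^ 2 \<le> 1"
    using \<open>t ^ 2 < 1\<close> by (intro power_mult_power_le_one) auto
  also have "((real n + 2) / real n * t ^ 2) ^ n * ((real n + 2) / 2 * (1 - t ^ 2)) ^ 2
      = (extremal_coeff n * t ^ n * (1 - t ^ 2)) ^ 2"
  proof -
    have "(t ^ n) ^ 2 = (t ^ 2) ^ n"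
      by (simp flip: power_mult add: mult.commute)
    then show ?thesis
      unfolding power_mult_distrib extremal_coeff_squared[OF assms(1)] by (simp only: mult_ac)
  qed
  finally have "extremal_coeff n * t ^ n * (1 - t ^ 2) \<le> 1"
    by (rule power2_le_imp_le[of _ 1, simplified]) 
  then show ?thesis
    using \<open>t ^ 2 < 1\<close> by (simp add: field_simps)
qed

lemma norm_taylor_coeff_Suc_sq:
  "real (Suc m) ^ 2 * norm (taylor_coeff f (Suc m)) ^ 2 = norm (taylor_coeff (deriv f) m) ^ 2"
  by (simp add: taylor_coeff_Suc norm_divide power_divide del: of_nat_Suc)

lemma classB_tail_bound:
  assumes F: "classB F" and n: "n \<ge> 1" and r: "0 \<le> r" "r \<le> sqrt (real n / real (n + 2))"
  shows "summable (\<lambda>j. real (j + n + 1) ^ 2 * norm (taylor_coeff F (j + n + 1)) ^ 2 * r ^ (2 * (j + n + 1) - 2))"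
    and "(\<Sum>j. real (j + n + 1) ^ 2 * norm (taylor_coeff F (j + n + 1)) ^ 2 * r ^ (2 * (j + n + 1) - 2))
           \<le> real (n + 2) ^ (n + 2) / (4 * real n ^ n) * r ^ (2 * n)"
proof -
  define \<rho> where "\<rho> = sqrt (real n / real (n + 2))"
  define c where "c m = norm (taylor_coeff (deriv F) m) ^ 2" for m
  have \<rho>: "0 < \<rho>" "\<rho> < 1" "\<rho> ^ 2 = real n / (real n + 2)"
    using n by (auto simp: \<rho>_def)
  have holF': "deriv F holomorphic_on ball 0 1"
    using F by (simp add: classB_def holomorphic_deriv)
  have "norm (deriv F z) \<le> (real n + 2) / 2" if "norm z = \<rho>" for z
  proof -
    have "z \<in> ball 0 1"
      using that \<rho> by simp
    then have "norm (deriv F z) \<le> 1 / (1 - \<rho> ^ 2)"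
      using F that unfolding classB_def by metis
    also have "\<dots> = (real n + 2) / 2"
      unfolding \<rho>(3) by (simp add: field_simps)
    finally show ?thesis .
  qed
  then have Bessel: "(\<Sum>m. c m * (\<rho> ^ 2) ^ m) \<le> ((real n + 2) / 2) ^ 2"
    using Bessel_circlepath[OF holF' \<rho>(1,2)] by (simp add: c_def power_mult)
  have summable: "summable (\<lambda>m. c m * (\<rho> ^ 2) ^ m)"
    using Parseval_circlepath(1)[OF holF' \<rho>(1,2)] by (simp add: c_def power_mult)
  have "r \<le> \<rho>"
    using r(2) by (simp add: \<rho>_def)
  then have r2: "0 \<le> r ^ 2" "r ^ 2 \<le> \<rho> ^ 2" "0 < \<rho> ^ 2"
    using r(1) \<rho>(1) by (simp_all add: power_mono)
  have summand: "real (j + n + 1) ^ 2 * norm (taylor_coeff F (j + n + 1)) ^ 2 * r ^ (2 * (j + n + 1) - 2)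
      = c (j + n) * (r ^ 2) ^ (j + n)" for j
  proof -
    have "r ^ (2 * (j + n + 1) - 2) = (r ^ 2) ^ (j + n)"
      by (simp flip: power_mult)
    then show ?thesis
      using norm_taylor_coeff_Suc_sq[of "j + n" F] by (simp add: c_def)
  qed
  show "summable (\<lambda>j. real (j + n + 1) ^ 2 * norm (taylor_coeff F (j + n + 1)) ^ 2 * r ^ (2 * (j + n + 1) - 2))"
    unfolding summand using c_def power_series_tail_le(1)[OF _ summable r2] by simp
  have "(\<Sum>j. c (j + n) * (r ^ 2) ^ (j + n)) \<le> (r ^ 2 / \<rho> ^ 2) ^ n * ((real n + 2) / 2) ^ 2"
    using power_series_tail_le(2)[OF _ summable r2, of n] Bessel r2 c_def
    by (force intro: order_trans mult_left_mono)
  also have "\<dots> = real (n + 2) ^ (n + 2) / (4 * real n ^ n) * r ^ (2 * n)"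
  proof -
    have ratio: "r ^ 2 / \<rho> ^ 2 = (real n + 2) / real n * r ^ 2"
      unfolding \<rho>(3) using n by (simp add: field_simps)
    have "(r ^ 2 / \<rho> ^ 2) ^ n = ((real n + 2) / real n) ^ n * r ^ (2 * n)"
      unfolding ratio power_mult_distrib power_mult ..
    then show ?thesis
      unfolding sharp_constant_eq[OF n] by (simp only: mult_ac)
  qed
  finally show "(\<Sum>j. real (j + n + 1) ^ 2 * norm (taylor_coeff F (j + n + 1)) ^ 2 * r ^ (2 * (j + n + 1) - 2))
           \<le> real (n + 2) ^ (n + 2) / (4 * real n ^ n) * r ^ (2 * n)"
    unfolding summand .
qed

lemma extremal_coeff_nonneg: "extremal_coeff n \<ge> 0"
  by (simp add: extremal_coeff_def)

lemma classB_extremal: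
  assumes n: "n \<ge> 1" and holG: "G holomorphic_on ball 0 1"
    and G': "\<forall>z\<in>ball 0 1. deriv G z = of_real (extremal_coeff n) * z ^ n"
  shows "classB G"
  unfolding classB_def
proof (intro conjI ballI holG)
  fix z :: complex
  assume "z \<in> ball 0 1"
  then have "norm (deriv G z) = extremal_coeff n * norm z ^ n"
    using G' extremal_coeff_nonneg by (simp add: norm_mult norm_power)
  also have "\<dots> \<le> 1 / (1 - norm z ^ 2)"
    using \<open>z \<in> ball 0 1\<close> n by (intro extremal_coeff_mult_power_le) auto
  finally show "norm (deriv G z) \<le> 1 / (1 - norm z ^ 2)" .
qed

lemma extremal_tail_sum:
  assumes n: "n \<ge> 1"
    and G': "\<forall>z\<in>ball 0 1. deriv G z = of_real (extremal_coeff n) * z ^ n"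
  shows "(\<Sum>j. real (j + n + 1) ^ 2 * norm (taylor_coeff G (j + n + 1)) ^ 2 * r ^ (2 * (j + n + 1) - 2))
           = real (n + 2) ^ (n + 2) / (4 * real n ^ n) * r ^ (2 * n)"
proof -
  have "eventually (\<lambda>z. z \<in> ball 0 1) (nhds (0 :: complex))"
    by (rule eventually_nhds_in_open) auto
  then have "eventually (\<lambda>z. deriv G z = of_real (extremal_coeff n) * z ^ n) (nhds 0)"
    by (rule eventually_mono) (use G' in auto)
  then have "taylor_coeff (deriv G) m = (if m = n then of_real (extremal_coeff n) else 0)" for m
    by (rule taylor_coeff_eventually_monomial)
  then have "real (j + n + 1) ^ 2 * norm (taylor_coeff G (j + n + 1)) ^ 2 * r ^ (2 * (j + n + 1) - 2)
      = (if j = 0 then extremal_coeff n ^ 2 * r ^ (2 * n) else 0)" for j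
    using norm_taylor_coeff_Suc_sq[of "j + n" G] extremal_coeff_nonneg by simp
  then have "(\<Sum>j. real (j + n + 1) ^ 2 * norm (taylor_coeff G (j + n + 1)) ^ 2 * r ^ (2 * (j + n + 1) - 2))
      = extremal_coeff n ^ 2 * r ^ (2 * n)"
    using sums_single[of 0 "\<lambda>_. extremal_coeff n ^ 2 * r ^ (2 * n)"] by (simp add: sums_iff)
  then show ?thesis
    unfolding sharp_constant_eq[OF n] extremal_coeff_squared[OF n] .
qed

theorem proposition1:
  fixes n :: nat
  assumes "n \<ge> 1"
  shows "(\<forall>F r. classB F \<longrightarrow> 0 \<le> r \<longrightarrow> r \<le> sqrt (real n / real (n + 2)) \<longrightarrow>
            summable (\<lambda>j. real (j + n + 1) ^ 2 * norm (taylor_coeff F (j + n + 1)) ^ 2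
                              * r ^ (2 * (j + n + 1) - 2)) \<and>
            (\<Sum>j. real (j + n + 1) ^ 2 * norm (taylor_coeff F (j + n + 1)) ^ 2
                              * r ^ (2 * (j + n + 1) - 2))
              \<le> real (n + 2) ^ (n + 2) / (4 * real n ^ n) * r ^ (2 * n))
       \<and> (\<forall>G. G holomorphic_on ball 0 1 \<longrightarrow> G 0 = 0 \<longrightarrow>
            (\<forall>z\<in>ball 0 1. deriv G z =
               complex_of_real ((real n + 2) / 2 * ((real n + 2) / real n) powr (real n / 2)) * z ^ n) \<longrightarrow>
            classB G \<and>
            (\<forall>r. 0 \<le> r \<longrightarrow> r \<le> sqrt (real n / real (n + 2)) \<longrightarrow>
               (\<Sum>j. real (j + n + 1) ^ 2 * norm (taylor_coeff G (j + n + 1)) ^ 2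
                              * r ^ (2 * (j + n + 1) - 2))
                 = real (n + 2) ^ (n + 2) / (4 * real n ^ n) * r ^ (2 * n)))"
  unfolding extremal_coeff_def[symmetric]
  by (intro conjI allI impI classB_tail_bound extremal_tail_sum) (use assms in \<open>auto intro: classB_extremal\<close>)

end
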